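(* Fix $n\ge2$. The valuation distribution is not identified from the equilibrium bid distribution: there exist two model structures $(u,F_0,D)$ and $(\tilde u,\tilde F_0,\tilde D)$, both satisfying the assumptions in the context, with $F_0\ne\tilde F_0$, whose symmetric equilibria induce the same distribution $G(\cdot\mid n)$ of equilibrium bids.
   Context: A model structure $(u,F_0,D)$ for a first-price auction (no reserve price) with $n\ge2$ bidders consists of: a utility $u:\mathbb R_+\to\mathbb R_+$ with $u'>0$, $u''\le0$, $u(0)=0$; a valuation distribution $F_0$ on $[\underline v,\overline v]$ with continuous density $f_0>0$, from which the $n$ values are drawn i.i.d.; and a function $D(\gamma)=F^*(F_0^{-1}(\gamma))$, where bidders have maxmin expected utility over a weakly compact convex set $\Gamma$ of strictly increasing $C^1$ distributions on $[\underline v,\overline v]$ containing $F_0$ with least element $F^*\in\Gamma$ ($F^*\le F$ pointwise for all $F\in\Gamma$) having density $f^*>0$. A symmetric equilibrium is a strictly increasing $\beta_n$ such that for every value $v$, $x=v$ maximizes $u[v-\beta_n(x)]D[F_0(x)]^{n-1}$. The bid distribution is $G(b\mid n)=F_0(\beta_n^{-1}(b))$, the distribution of $\beta_n(v)$ for $v\sim F_0$. *)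

theory Defs
  imports Complex_Main
begin

definition utility :: "(real \<Rightarrow> real) \<Rightarrow> bool" where
  "utility u \<longleftrightarrow> u 0 = 0 \<and> (\<forall>x\<ge>0. u x \<ge> 0) \<and>
     (\<exists>u1 u2. \<forall>x\<ge>0.
        (u has_real_derivative u1 x) (at x within {0..}) \<and> u1 x > 0 \<and>
        (u1 has_real_derivative u2 x) (at x within {0..}) \<and> u2 x \<le> 0)"

definition cdf_on :: "real \<Rightarrow> real \<Rightarrow> (real \<Rightarrow> real) \<Rightarrow> bool" where
  "cdf_on lo hi F \<longleftrightarrow> lo < hi \<and> (\<forall>x\<le>lo. F x = 0) \<and> (\<forall>x\<ge>hi. F x = 1) \<and>
     mono F"

definition valuation_dist :: "real \<Rightarrow> real \<Rightarrow> (real \<Rightarrow> real) \<Rightarrow> bool" where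
  "valuation_dist lo hi F0 \<longleftrightarrow> cdf_on lo hi F0 \<and>
     (\<exists>f0. continuous_on {lo..hi} f0 \<and> (\<forall>x\<in>{lo..hi}. f0 x > 0 \<and>
        (F0 has_real_derivative f0 x) (at x within {lo..hi})))"

definition smooth_dist :: "real \<Rightarrow> real \<Rightarrow> (real \<Rightarrow> real) \<Rightarrow> bool" where
  "smooth_dist lo hi F \<longleftrightarrow> cdf_on lo hi F \<and> strict_mono_on {lo..hi} F \<and>
     (\<exists>f. continuous_on {lo..hi} f \<and>
        (\<forall>x\<in>{lo..hi}. (F has_real_derivative f x) (at x within {lo..hi})))"

text \<open>Weak compactness of a set of distributions on [lo,hi] (topology of weak
  convergence, which is metrizable here, so sequential compactness).  Since all
  members are continuous CDFs, weak convergence to a member means pointwise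
  convergence of the CDFs.\<close>
definition weakly_compact_dists :: "real \<Rightarrow> real \<Rightarrow> (real \<Rightarrow> real) set \<Rightarrow> bool" where
  "weakly_compact_dists lo hi \<Gamma> \<longleftrightarrow>
     (\<forall>s::nat \<Rightarrow> real \<Rightarrow> real. (\<forall>k. s k \<in> \<Gamma>) \<longrightarrow>
        (\<exists>r F. strict_mono r \<and> F \<in> \<Gamma> \<and>
           (\<forall>x\<in>{lo..hi}. (\<lambda>k. s (r k) x) \<longlonglongrightarrow> F x)))"

definition convex_dists :: "(real \<Rightarrow> real) set \<Rightarrow> bool" where
  "convex_dists \<Gamma> \<longleftrightarrow>
     (\<forall>F\<in>\<Gamma>. \<forall>G\<in>\<Gamma>. \<forall>t\<in>{0..1}. (\<lambda>x. t * F x + (1 - t) * G x) \<in> \<Gamma>)"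

definition ambiguity_set ::
  "real \<Rightarrow> real \<Rightarrow> (real \<Rightarrow> real) set \<Rightarrow> (real \<Rightarrow> real) \<Rightarrow> (real \<Rightarrow> real) \<Rightarrow> bool" where
  "ambiguity_set lo hi \<Gamma> F0 Fstar \<longleftrightarrow>
     (\<forall>F\<in>\<Gamma>. smooth_dist lo hi F) \<and> convex_dists \<Gamma> \<and>
     weakly_compact_dists lo hi \<Gamma> \<and> F0 \<in> \<Gamma> \<and> Fstar \<in> \<Gamma> \<and>
     (\<forall>F\<in>\<Gamma>. \<forall>x. Fstar x \<le> F x) \<and>
     (\<exists>fs. \<forall>x\<in>{lo..hi}. fs x > 0 \<and>
        (Fstar has_real_derivative fs x) (at x within {lo..hi}))"

text \<open>Model structure (u, F0, D) with support [lo,hi]; D(gamma) = F*(F0^{-1}(gamma)),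
  written as D(F0 x) = F*(x) for x in [lo,hi].\<close>
definition model_structure ::
  "(real \<Rightarrow> real) \<Rightarrow> real \<Rightarrow> real \<Rightarrow> (real \<Rightarrow> real) \<Rightarrow> (real \<Rightarrow> real) \<Rightarrow> bool" where
  "model_structure u lo hi F0 D \<longleftrightarrow> utility u \<and> valuation_dist lo hi F0 \<and>
     (\<exists>\<Gamma> Fstar. ambiguity_set lo hi \<Gamma> F0 Fstar \<and>
        (\<forall>x\<in>{lo..hi}. D (F0 x) = Fstar x))"

text \<open>Symmetric equilibrium with n bidders: strictly increasing beta such that for
  every value v, reporting x = v maximizes u[v - beta x] D[F0 x]^(n-1)
  (bids never exceed values, so that u is evaluated on R_+).\<close>
definition sym_equilibrium ::
  "nat \<Rightarrow> (real \<Rightarrow> real) \<Rightarrow> real \<Rightarrow> real \<Rightarrow> (real \<Rightarrow> real) \<Rightarrow> (real \<Rightarrow> real)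
     \<Rightarrow> (real \<Rightarrow> real) \<Rightarrow> bool" where
  "sym_equilibrium n u lo hi F0 D \<beta> \<longleftrightarrow> strict_mono_on {lo..hi} \<beta> \<and>
     (\<forall>v\<in>{lo..hi}. \<beta> v \<le> v \<and>
        (\<forall>x\<in>{lo..hi}. \<beta> x \<le> v \<longrightarrow>
           u (v - \<beta> x) * D (F0 x) ^ (n - 1) \<le> u (v - \<beta> v) * D (F0 v) ^ (n - 1)))"

text \<open>Bid distribution G(b) = P(beta(V) \<le> b), V ~ F0, i.e. F0(beta^{-1}(b)).\<close>
definition bid_cdf ::
  "real \<Rightarrow> real \<Rightarrow> (real \<Rightarrow> real) \<Rightarrow> (real \<Rightarrow> real) \<Rightarrow> real \<Rightarrow> real" where
  "bid_cdf lo hi F0 \<beta> b =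
     (if {v\<in>{lo..hi}. \<beta> v \<le> b} = {} then 0
      else F0 (Sup {v\<in>{lo..hi}. \<beta> v \<le> b}))"

end

theory Submission
  imports Defs
begin

text \<open>Both models are unambiguous (\<open>\<Gamma> = {F0}\<close>, so \<open>D\<close> is the identity); write \<open>M = n - 1\<close>.
  Risk-neutral bidders with values uniform on \<open>[0, 2M + 2]\<close> bid \<open>M/(M + 1) * v\<close>, so their bids are
  uniform on \<open>[0, 2M]\<close>. Bidders with utility \<open>x/(1 + x)\<close> whose surplus \<open>t\<close> at value \<open>v\<close> is defined by
  \<open>v = t + M t(1 + t)\<close> bid \<open>\<beta>(v) = M t(1 + t)\<close>, and choosing \<open>F0(v) = \<beta>(v)/(2M)\<close> on
  \<open>[0, 2M + 1]\<close> makes their bids uniform on \<open>[0, 2M]\<close> as well. That truthful reporting is optimal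
  follows from Bernoulli's inequality in the first model; in the second, the derivative of the payoff
  with respect to the reported surplus has the sign of the true minus the reported surplus.\<close>

lemma model_structure_no_ambiguity:
  fixes F G f :: "real \<Rightarrow> real"
  assumes u: "utility u" and lo_hi: "lo < hi"
    and below: "\<forall>x\<le>lo. F x = 0" and above: "\<forall>x\<ge>hi. F x = 1"
    and F_G: "\<forall>x\<in>{lo..hi}. F x = G x"
    and f_cont: "continuous_on {lo..hi} f"
    and G_deriv: "\<forall>x\<in>{lo..hi}. 0 < f x \<and> (G has_real_derivative f x) (at x)"
  shows "model_structure u lo hi F (\<lambda>\<gamma>. \<gamma>)"
proof -
  have F_deriv: "(F has_real_derivative f x) (at x within {lo..hi})" if "x \<in> {lo..hi}" for x
  proof (rule has_field_derivative_transform_within[OF _ zero_less_one that])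
    show "(G has_real_derivative f x) (at x within {lo..hi})"
      using G_deriv that by (blast intro: has_field_derivative_at_within)
    show "G y = F y" if "y \<in> {lo..hi}" for y
      using F_G that by simp
  qed
  have strict: "strict_mono_on {lo..hi} F"
  proof (rule strict_mono_onI)
    fix r s assume r: "r \<in> {lo..hi}" and s: "s \<in> {lo..hi}" and "r < s"
    have "G r < G s"
      using \<open>r < s\<close> proof (rule DERIV_pos_imp_increasing)
      fix x assume "r \<le> x" "x \<le> s"
      then have "x \<in> {lo..hi}" using r s by simp
      then show "\<exists>d. (G has_real_derivative d) (at x) \<and> 0 < d" using G_deriv by blast
    qed
    then show "F r < F s" using F_G r s by simp
  qed
  have "mono F"
  proof (rule monoI)
    fix x y :: real assume "x \<le> y"
    define clamp where "clamp t = max lo (min hi t)" for t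
    have F_clamp: "F t = F (clamp t)" for t
    proof (cases "t \<le> lo")
      case True
      then show ?thesis using below lo_hi by (simp add: clamp_def)
    next
      case False
      then show ?thesis using above by (cases "hi \<le> t") (simp_all add: clamp_def)
    qed
    have "clamp x \<le> clamp y" "clamp x \<in> {lo..hi}" "clamp y \<in> {lo..hi}"
      using \<open>x \<le> y\<close> lo_hi unfolding clamp_def by auto
    then have "F (clamp x) \<le> F (clamp y)"
      using strict_mono_onD[OF strict, of "clamp x" "clamp y"] by (cases "clamp x = clamp y") auto
    then show "F x \<le> F y" by (simp only: F_clamp[symmetric])
  qed
  have dens: "\<forall>x\<in>{lo..hi}. 0 < f x \<and> (F has_real_derivative f x) (at x within {lo..hi})"
    using G_deriv F_deriv by blast
  have cdf: "cdf_on lo hi F"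
    unfolding cdf_on_def using lo_hi below above \<open>mono F\<close> by blast
  have "valuation_dist lo hi F"
    unfolding valuation_dist_def using cdf f_cont dens by blast
  moreover have "smooth_dist lo hi F"
    unfolding smooth_dist_def using cdf strict f_cont F_deriv by blast
  moreover have "ambiguity_set lo hi {F} F F"
    unfolding ambiguity_set_def convex_dists_def weakly_compact_dists_def
  proof (intro conjI)
    show "\<forall>F'\<in>{F}. \<forall>G'\<in>{F}. \<forall>t\<in>{0..1}. (\<lambda>x. t * F' x + (1 - t) * G' x) \<in> {F}"
      by (simp add: algebra_simps)
    show "\<forall>s::nat\<Rightarrow>real\<Rightarrow>real. (\<forall>k. s k \<in> {F}) \<longrightarrow>
        (\<exists>r F'. strict_mono r \<and> F' \<in> {F} \<and> (\<forall>x\<in>{lo..hi}. (\<lambda>k. s (r k) x) \<longlonglongrightarrow> F' x))"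
      by (intro allI impI exI[of _ id] exI[of _ F]) (auto simp: strict_mono_def)
  qed (use \<open>smooth_dist lo hi F\<close> dens in auto)
  ultimately show ?thesis
    unfolding model_structure_def using u by blast
qed

definition uniform_cdf :: "real \<Rightarrow> real \<Rightarrow> real \<Rightarrow> real" where
  "uniform_cdf a c b = (if b < a then 0 else if c \<le> b then 1 else (b - a) / (c - a))"

lemma bid_cdf_eq_uniform_cdf:
  assumes lo_hi: "lo < hi" and strict: "strict_mono_on {lo..hi} \<beta>"
    and cont: "continuous_on {lo..hi} \<beta>"
    and F_\<beta>: "\<forall>v\<in>{lo..hi}. F v = (\<beta> v - \<beta> lo) / (\<beta> hi - \<beta> lo)"
  shows "bid_cdf lo hi F \<beta> b = uniform_cdf (\<beta> lo) (\<beta> hi) b"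
proof -
  have le_iff: "\<beta> v \<le> \<beta> w \<longleftrightarrow> v \<le> w" if "v \<in> {lo..hi}" "w \<in> {lo..hi}" for v w
    using strict_mono_onD[OF strict that] strict_mono_onD[OF strict that(2,1)]
    by (cases v w rule: linorder_cases) auto
  have "\<beta> lo < \<beta> hi" using strict_mono_onD[OF strict] lo_hi by simp
  consider "b < \<beta> lo" | "\<beta> hi \<le> b" | "\<beta> lo \<le> b" "b < \<beta> hi" by linarith
  then show ?thesis
  proof cases
    case 1
    have "{v\<in>{lo..hi}. \<beta> v \<le> b} = {}"
    proof (intro equals0I)
      fix v assume "v \<in> {v\<in>{lo..hi}. \<beta> v \<le> b}"
      then have "v \<in> {lo..hi}" "\<beta> v \<le> b" by simp_all
      with le_iff[of lo v] lo_hi 1 show False by simp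
    qed
    then show ?thesis using 1 unfolding bid_cdf_def uniform_cdf_def by simp
  next
    case 2
    have "\<beta> v \<le> b" if "v \<in> {lo..hi}" for v
      using le_iff[OF that, of hi] that lo_hi 2 by simp
    then have "{v\<in>{lo..hi}. \<beta> v \<le> b} = {lo..hi}"
      by blast
    then show ?thesis
      using 2 lo_hi F_\<beta> \<open>\<beta> lo < \<beta> hi\<close> unfolding bid_cdf_def uniform_cdf_def by auto
  next
    case 3
    obtain w where w: "lo \<le> w" "w \<le> hi" "\<beta> w = b"
      using IVT'[of \<beta> lo b hi] 3 lo_hi cont by auto
    then have "{v\<in>{lo..hi}. \<beta> v \<le> b} = {lo..w}"
      using le_iff[of _ w] by auto
    then show ?thesis
      using 3 w F_\<beta> unfolding bid_cdf_def uniform_cdf_def by auto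
  qed
qed

lemma DERIV_max_at_sign_change:
  fixes f f' :: "real \<Rightarrow> real"
  assumes "a \<le> y" "y \<le> b" "s \<in> {a..b}" and cont: "continuous_on {a..b} f"
    and deriv: "\<And>t. a < t \<Longrightarrow> t < b \<Longrightarrow> (f has_real_derivative f' t) (at t)"
    and incr: "\<And>t. a < t \<Longrightarrow> t < y \<Longrightarrow> 0 \<le> f' t"
    and decr: "\<And>t. y < t \<Longrightarrow> t < b \<Longrightarrow> f' t \<le> 0"
  shows "f s \<le> f y"
proof (cases "s \<le> y")
  case True
  show ?thesis
  proof (rule DERIV_nonneg_imp_increasing_open[OF True])
    fix t assume "s < t" "t < y"
    with assms have "a < t" "t < b" by auto
    with deriv incr \<open>t < y\<close>
    show "\<exists>d. (f has_real_derivative d) (at t) \<and> 0 \<le> d" by blast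
  next
    show "continuous_on {s..y} f"
      by (rule continuous_on_subset[OF cont]) (use assms in auto)
  qed
next
  case False
  show ?thesis
  proof (rule DERIV_nonpos_imp_decreasing_open[of y s])
    fix t assume "y < t" "t < s"
    with assms have "a < t" "t < b" by auto
    with deriv decr \<open>y < t\<close>
    show "\<exists>d. (f has_real_derivative d) (at t) \<and> d \<le> 0" by blast
  next
    show "continuous_on {y..s} f"
      by (rule continuous_on_subset[OF cont]) (use assms in auto)
  qed (use False in auto)
qed

lemma utility_id: "utility (\<lambda>x. x)"
  unfolding utility_def
  by (intro conjI exI[of _ "\<lambda>_. 1"] exI[of _ "\<lambda>_. 0"]) (auto intro!: derivative_eq_intros)

lemma utility_ratio: "utility (\<lambda>x. x / (1 + x))"
  unfolding utility_def
proof (intro conjI exI allI impI)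
  fix x :: real assume "0 \<le> x"
  then have "1 + x \<noteq> 0" by simp
  show "((\<lambda>x. x / (1 + x)) has_real_derivative 1 / (1 + x)\<^sup>2) (at x within {0..})"
    using \<open>1 + x \<noteq> 0\<close>
    by (auto intro!: derivative_eq_intros simp: field_simps power2_eq_square)
  show "((\<lambda>x. 1 / (1 + x)\<^sup>2) has_real_derivative -2 / (1 + x) ^ 3) (at x within {0..})"
    using \<open>0 \<le> x\<close> by (auto intro!: derivative_eq_intros simp: divide_simps eval_nat_numeral)
  show "0 < 1 / (1 + x)\<^sup>2" "-2 / (1 + x) ^ 3 \<le> (0::real)"
    using \<open>0 \<le> x\<close> by simp_all
qed simp_all

definition pronic :: "real \<Rightarrow> real" where
  "pronic t = t * (1 + t)"

lemma pronic_nonneg: "0 \<le> t \<Longrightarrow> 0 \<le> pronic t"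
  unfolding pronic_def by simp

lemma pronic_strict_mono: "0 \<le> s \<Longrightarrow> s < t \<Longrightarrow> pronic s < pronic t"
  unfolding pronic_def by (smt (verit) mult_strict_mono)

lemma pronic_le_iff: "0 \<le> s \<Longrightarrow> 0 \<le> t \<Longrightarrow> pronic s \<le> pronic t \<longleftrightarrow> s \<le> t"
  using pronic_strict_mono by (metis linorder_not_le order_le_less)

lemma has_real_derivative_pronic: "(pronic has_real_derivative 1 + 2 * t) (at t)"
  unfolding pronic_def[abs_def] by (auto intro!: derivative_eq_intros)

lemma power_payoff_max:
  fixes m :: nat and x v :: real
  assumes "0 \<le> x" "0 \<le> v"
  shows "(v - real m / (real m + 1) * x) * x ^ m \<le> (v - real m / (real m + 1) * v) * v ^ m"
proof (cases "x = 0")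
  case True
  then show ?thesis using assms by (cases m) (auto simp: field_simps)
next
  case False
  with assms have "0 < x" by simp
  define t where "t = v / x"
  have "(real m + 1) * ((v - real m / (real m + 1) * x) * x ^ m) = x ^ Suc m * (1 + real (Suc m) * (t - 1))"
    using \<open>0 < x\<close> by (simp add: t_def field_simps)
  also have "\<dots> \<le> x ^ Suc m * (1 + (t - 1)) ^ Suc m"
    using assms \<open>0 < x\<close> by (intro mult_left_mono Bernoulli_inequality) (simp_all add: t_def)
  also have "\<dots> = v ^ Suc m"
    using \<open>0 < x\<close> by (simp add: t_def power_divide)
  also have "\<dots> = (real m + 1) * ((v - real m / (real m + 1) * v) * v ^ m)"
    by (simp add: field_simps)
  finally show ?thesis by simp
qed

lemma ratio_payoff_deriv:
  fixes k :: nat and c t :: real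
  defines "z \<equiv> c - real (Suc k) * pronic t"
  assumes "1 + z \<noteq> 0"
  shows "((\<lambda>x. (c - real (Suc k) * pronic x) / (1 + (c - real (Suc k) * pronic x)) * pronic x ^ Suc k)
      has_real_derivative
      real (Suc k) * (1 + 2 * t) * pronic t ^ k / (1 + z)\<^sup>2 * (z * (1 + z) - pronic t)) (at t)"
proof -
  have ratio: "((\<lambda>x. (c - real (Suc k) * pronic x) / (1 + (c - real (Suc k) * pronic x)))
      has_real_derivative - (real (Suc k) * (1 + 2 * t)) / (1 + z)\<^sup>2) (at t)"
    using assms(2) unfolding z_def
    by (auto intro!: derivative_eq_intros has_real_derivative_pronic simp: field_simps power2_eq_square)
  have power: "((\<lambda>x. pronic x ^ Suc k) has_real_derivative real (Suc k) * pronic t ^ k * (1 + 2 * t)) (at t)"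
    using DERIV_power[OF has_real_derivative_pronic[of t], where n="Suc k"] by (simp add: ac_simps)
  have "- (real (Suc k) * (1 + 2 * t)) / (1 + z)\<^sup>2 * (p * q)
      + real (Suc k) * q * (1 + 2 * t) * (z / (1 + z))
      = real (Suc k) * (1 + 2 * t) * q / (1 + z)\<^sup>2 * (z * (1 + z) - p)" for p q
    using assms(2) by (simp add: divide_simps) algebra
  from this[of "pronic t" "pronic t ^ k"]
  have "- (real (Suc k) * (1 + 2 * t)) / (1 + z)\<^sup>2 * pronic t ^ Suc k
      + real (Suc k) * pronic t ^ k * (1 + 2 * t) * (z / (1 + z))
      = real (Suc k) * (1 + 2 * t) * pronic t ^ k / (1 + z)\<^sup>2 * (z * (1 + z) - pronic t)"
    by (simp add: ac_simps)
  with DERIV_mult[OF ratio power] show ?thesis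
    unfolding z_def[symmetric] by simp
qed

lemma ratio_payoff_max:
  fixes m :: nat and y s :: real
  assumes "1 \<le> m" "0 \<le> y" "0 \<le> s"
    and "0 \<le> y + real m * pronic y - real m * pronic s"
  shows "(y + real m * pronic y - real m * pronic s) / (1 + (y + real m * pronic y - real m * pronic s))
      * pronic s ^ m \<le> y / (1 + y) * pronic y ^ m"
proof -
  obtain k where m: "m = Suc k" using assms(1) by (cases m) auto
  define c where "c = y + real m * pronic y"
  define Z where "Z t = c - real m * pronic t" for t
  define \<Phi> where "\<Phi> t = Z t / (1 + Z t) * pronic t ^ m" for t
  define \<Phi>' where
    "\<Phi>' t = real m * (1 + 2 * t) * pronic t ^ k / (1 + Z t)\<^sup>2 * (Z t * (1 + Z t) - pronic t)" for t
  define b where "b = max s y"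
  have "0 \<le> Z b"
    using assms(2,4) unfolding b_def Z_def c_def by (cases "s \<le> y") (auto simp: max_def)
  then have Z_nonneg: "0 \<le> Z t" if "0 \<le> t" "t \<le> b" for t
    using pronic_le_iff[of t b] that unfolding Z_def by (smt (verit) mult_left_mono of_nat_0_le_iff)
  have deriv: "(\<Phi> has_real_derivative \<Phi>' t) (at t)" if "0 \<le> t" "t \<le> b" for t
    using ratio_payoff_deriv[of c k t] Z_nonneg[OF that]
    unfolding \<Phi>_def[abs_def] \<Phi>'_def Z_def m by simp
  define P where
    "P t = real m * (1 + 2 * t) * pronic t ^ k / (1 + Z t)\<^sup>2 * ((1 + real m * (1 + y + t)) * (1 + Z t + t))"
    for t
  \<comment> \<open>\<open>\<Phi>'\<close> has the sign of \<open>y - t\<close>, so \<open>\<Phi>\<close> is maximal at the truthful surplus \<open>y\<close>.\<close>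
  have "Z t * (1 + Z t) - pronic t = (y - t) * ((1 + real m * (1 + y + t)) * (1 + Z t + t))" for t
    unfolding Z_def c_def pronic_def by algebra
  then have \<Phi>'_factor: "\<Phi>' t = (y - t) * P t" for t
    unfolding \<Phi>'_def P_def by simp
  have P_nonneg: "0 \<le> P t" if "0 \<le> t" "t \<le> b" for t
    unfolding P_def using Z_nonneg[OF that] pronic_nonneg[OF that(1)] that assms(2) by simp
  have "\<Phi> s \<le> \<Phi> y"
  proof (rule DERIV_max_at_sign_change[where f = \<Phi> and f' = \<Phi>' and a = 0 and b = b and s = s and y = y])
    show "continuous_on {0..b} \<Phi>"
      using deriv by (intro continuous_at_imp_continuous_on ballI DERIV_isCont) auto
    show "(\<Phi> has_real_derivative \<Phi>' t) (at t)" if "0 < t" "t < b" for t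
      using deriv that by simp
    show "0 \<le> \<Phi>' t" if "0 < t" "t < y" for t
      unfolding \<Phi>'_factor using P_nonneg[of t] that by (simp add: b_def)
    show "\<Phi>' t \<le> 0" if "y < t" "t < b" for t
      unfolding \<Phi>'_factor using P_nonneg[of t] that assms(2)
      by (simp add: mult_nonpos_nonneg)
  qed (use assms in \<open>auto simp: b_def\<close>)
  then show ?thesis
    unfolding \<Phi>_def Z_def c_def by simp
qed

text \<open>The inverse on \<open>[0,\<infinity>)\<close> of \<open>t \<mapsto> t + M * pronic t\<close>: in the second model a bidder with
  value \<open>v\<close> keeps the surplus \<open>t = surplus M v\<close> and bids \<open>M * pronic t\<close>.\<close>
definition surplus :: "real \<Rightarrow> real \<Rightarrow> real" where
  "surplus M v = (sqrt ((M + 1)\<^sup>2 + 4 * M * v) - (M + 1)) / (2 * M)"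

lemma surplus_nonneg:
  assumes "0 < M" "0 \<le> v"
  shows "0 \<le> surplus M v"
proof -
  have "sqrt ((M + 1)\<^sup>2) \<le> sqrt ((M + 1)\<^sup>2 + 4 * M * v)"
    using assms by (intro real_sqrt_le_mono) simp
  then show ?thesis using assms unfolding surplus_def by simp
qed

lemma surplus_add_pronic:
  assumes "0 < M" "0 \<le> v"
  shows "surplus M v + M * pronic (surplus M v) = v"
proof -
  define r where "r = sqrt ((M + 1)\<^sup>2 + 4 * M * v)"
  define y where "y = surplus M v"
  have r: "r\<^sup>2 = (M + 1)\<^sup>2 + 4 * M * v"
    unfolding r_def using assms by simp
  have y: "2 * M * y = r - (M + 1)"
    unfolding y_def surplus_def r_def using assms by simp
  have "4 * M * (y + M * pronic y) = (2 * M * y)\<^sup>2 + 2 * (M + 1) * (2 * M * y)"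
    unfolding pronic_def by (simp add: algebra_simps power2_eq_square)
  also have "\<dots> = 4 * M * v"
    unfolding y using r by (simp add: algebra_simps power2_eq_square)
  finally show ?thesis using assms unfolding y_def by simp
qed

lemma surplus_add_pronic_inverse:
  assumes "0 < M" "0 \<le> t"
  shows "surplus M (t + M * pronic t) = t"
proof -
  have "(M + 1)\<^sup>2 + 4 * M * (t + M * pronic t) = (2 * M * t + M + 1)\<^sup>2"
    unfolding pronic_def by (simp add: algebra_simps power2_eq_square)
  then show ?thesis unfolding surplus_def using assms by simp
qed

lemma surplus_strict_mono:
  assumes "0 < M" "0 \<le> v" "v < w"
  shows "surplus M v < surplus M w"
proof (rule ccontr)
  assume "\<not> surplus M v < surplus M w"
  then have le: "surplus M w \<le> surplus M v" by simp
  then have "pronic (surplus M w) \<le> pronic (surplus M v)"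
    using pronic_le_iff surplus_nonneg assms by simp
  with le have "surplus M w + M * pronic (surplus M w) \<le> surplus M v + M * pronic (surplus M v)"
    using assms(1) by (smt (verit) mult_left_mono)
  then show False using surplus_add_pronic assms by simp
qed

lemma has_real_derivative_surplus:
  assumes "0 < M" "0 \<le> v"
  shows "(surplus M has_real_derivative 1 / sqrt ((M + 1)\<^sup>2 + 4 * M * v)) (at v)"
proof -
  have "0 < (M + 1)\<^sup>2 + 4 * M * v"
    using assms by (smt (verit) mult_nonneg_nonneg zero_less_power)
  then show ?thesis
    unfolding surplus_def[abs_def] using assms
    by (auto intro!: derivative_eq_intros simp: field_simps)
qed

lemma continuous_on_surplus: "0 < M \<Longrightarrow> continuous_on {0..} (surplus M)"
  using has_real_derivative_surplus
  by (intro continuous_at_imp_continuous_on ballI DERIV_isCont) auto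

definition cdf_neutral :: "real \<Rightarrow> real \<Rightarrow> real" where
  "cdf_neutral M x = (if x \<le> 0 then 0 else if 2 * M + 2 \<le> x then 1 else x / (2 * M + 2))"

definition bid_neutral :: "real \<Rightarrow> real \<Rightarrow> real" where
  "bid_neutral M v = M / (M + 1) * v"

lemma cdf_neutral_eq: "0 < M \<Longrightarrow> x \<in> {0..2 * M + 2} \<Longrightarrow> cdf_neutral M x = x / (2 * M + 2)"
  unfolding cdf_neutral_def by auto

lemma model_structure_neutral:
  assumes "0 < M"
  shows "model_structure (\<lambda>x. x) 0 (2 * M + 2) (cdf_neutral M) (\<lambda>\<gamma>. \<gamma>)"
  using assms
  by (intro model_structure_no_ambiguity[OF utility_id,
        where G = "\<lambda>x. x / (2 * M + 2)" and f = "\<lambda>_. 1 / (2 * M + 2)"])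
    (auto simp: cdf_neutral_def intro!: derivative_eq_intros)

lemma bid_neutral_strict_mono_on: "0 < M \<Longrightarrow> strict_mono_on A (bid_neutral M)"
  unfolding bid_neutral_def by (intro strict_mono_onI mult_strict_left_mono) auto

lemma sym_equilibrium_neutral:
  assumes "2 \<le> n" and M: "M = real (n - 1)"
  shows "sym_equilibrium n (\<lambda>x. x) 0 (2 * M + 2) (cdf_neutral M) (\<lambda>\<gamma>. \<gamma>) (bid_neutral M)"
  unfolding sym_equilibrium_def
proof (intro conjI ballI impI)
  have "0 < M" using assms by simp
  show "strict_mono_on {0..2 * M + 2} (bid_neutral M)"
    using \<open>0 < M\<close> by (rule bid_neutral_strict_mono_on)
  fix v assume v: "v \<in> {0..2 * M + 2}"
  then show "bid_neutral M v \<le> v"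
    using \<open>0 < M\<close> by (simp add: bid_neutral_def field_simps)
  fix x assume x: "x \<in> {0..2 * M + 2}"
  have "(v - bid_neutral M x) * x ^ (n - 1) / (2 * M + 2) ^ (n - 1)
      \<le> (v - bid_neutral M v) * v ^ (n - 1) / (2 * M + 2) ^ (n - 1)"
    using power_payoff_max[of x v "n - 1"] x v \<open>0 < M\<close>
    unfolding bid_neutral_def M by (intro divide_right_mono) auto
  then show "(v - bid_neutral M x) * cdf_neutral M x ^ (n - 1)
      \<le> (v - bid_neutral M v) * cdf_neutral M v ^ (n - 1)"
    using x v \<open>0 < M\<close> by (simp add: cdf_neutral_eq power_divide)
qed

lemma bid_cdf_neutral:
  assumes "0 < M"
  shows "bid_cdf 0 (2 * M + 2) (cdf_neutral M) (bid_neutral M) b = uniform_cdf 0 (2 * M) b"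
proof -
  have top: "bid_neutral M (2 * M + 2) = 2 * M"
    using assms by (simp add: bid_neutral_def field_simps)
  have "bid_cdf 0 (2 * M + 2) (cdf_neutral M) (bid_neutral M) b
      = uniform_cdf (bid_neutral M 0) (bid_neutral M (2 * M + 2)) b"
  proof (rule bid_cdf_eq_uniform_cdf)
    show "strict_mono_on {0..2 * M + 2} (bid_neutral M)"
      using assms by (rule bid_neutral_strict_mono_on)
    show "continuous_on {0..2 * M + 2} (bid_neutral M)"
      unfolding bid_neutral_def by (intro continuous_intros)
    show "\<forall>v\<in>{0..2 * M + 2}. cdf_neutral M v
        = (bid_neutral M v - bid_neutral M 0) / (bid_neutral M (2 * M + 2) - bid_neutral M 0)"
      using assms unfolding top by (simp add: cdf_neutral_eq bid_neutral_def divide_simps)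
  qed (use assms in simp)
  then show ?thesis unfolding top by (simp add: bid_neutral_def)
qed

definition cdf_averse :: "real \<Rightarrow> real \<Rightarrow> real" where
  "cdf_averse M x = (if x \<le> 0 then 0 else if 2 * M + 1 \<le> x then 1 else pronic (surplus M x) / 2)"

definition bid_averse :: "real \<Rightarrow> real \<Rightarrow> real" where
  "bid_averse M v = v - surplus M v"

lemma surplus_zero: "0 < M \<Longrightarrow> surplus M 0 = 0"
  using surplus_add_pronic_inverse[of M 0] by (simp add: pronic_def)

lemma surplus_top: "0 < M \<Longrightarrow> surplus M (2 * M + 1) = 1"
  using surplus_add_pronic_inverse[of M 1] by (simp add: pronic_def algebra_simps)

lemma cdf_averse_eq: "0 < M \<Longrightarrow> x \<in> {0..2 * M + 1} \<Longrightarrow> cdf_averse M x = pronic (surplus M x) / 2"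
  unfolding cdf_averse_def by (auto simp: surplus_zero surplus_top pronic_def)

lemma bid_averse_eq: "0 < M \<Longrightarrow> 0 \<le> v \<Longrightarrow> bid_averse M v = M * pronic (surplus M v)"
  using surplus_add_pronic[of M v] by (simp add: bid_averse_def)

lemma bid_averse_strict_mono_on:
  assumes "0 < M" "A \<subseteq> {0..}"
  shows "strict_mono_on A (bid_averse M)"
proof (rule strict_mono_onI)
  fix v w assume "v \<in> A" "w \<in> A" "v < w"
  with assms have "0 \<le> v" "0 \<le> w" by auto
  with \<open>v < w\<close> assms have "pronic (surplus M v) < pronic (surplus M w)"
    by (intro pronic_strict_mono surplus_nonneg surplus_strict_mono)
  then show "bid_averse M v < bid_averse M w"
    using assms(1) \<open>0 \<le> v\<close> \<open>0 \<le> w\<close> by (simp add: bid_averse_eq)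
qed

lemma model_structure_averse:
  assumes "0 < M"
  shows "model_structure (\<lambda>x. x / (1 + x)) 0 (2 * M + 1) (cdf_averse M) (\<lambda>\<gamma>. \<gamma>)"
proof (rule model_structure_no_ambiguity[OF utility_ratio,
      where G = "\<lambda>x. pronic (surplus M x) / 2"
        and f = "\<lambda>x. (1 + 2 * surplus M x) / sqrt ((M + 1)\<^sup>2 + 4 * M * x) / 2"])
  have pos: "0 < (M + 1)\<^sup>2 + 4 * M * x" if "0 \<le> x" for x
    using assms that by (smt (verit) mult_nonneg_nonneg zero_less_power)
  show "continuous_on {0..2 * M + 1} (\<lambda>x. (1 + 2 * surplus M x) / sqrt ((M + 1)\<^sup>2 + 4 * M * x) / 2)"
    using continuous_on_subset[OF continuous_on_surplus[OF assms], of "{0..2 * M + 1}"]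
    by (intro continuous_intros) (auto dest!: pos)
  show "\<forall>x\<in>{0..2 * M + 1}. 0 < (1 + 2 * surplus M x) / sqrt ((M + 1)\<^sup>2 + 4 * M * x) / 2
      \<and> ((\<lambda>x. pronic (surplus M x) / 2) has_real_derivative
          (1 + 2 * surplus M x) / sqrt ((M + 1)\<^sup>2 + 4 * M * x) / 2) (at x)"
  proof
    fix x :: real assume "x \<in> {0..2 * M + 1}"
    then have "0 \<le> x" by simp
    show "0 < (1 + 2 * surplus M x) / sqrt ((M + 1)\<^sup>2 + 4 * M * x) / 2
      \<and> ((\<lambda>x. pronic (surplus M x) / 2) has_real_derivative
          (1 + 2 * surplus M x) / sqrt ((M + 1)\<^sup>2 + 4 * M * x) / 2) (at x)"
      using surplus_nonneg[OF assms \<open>0 \<le> x\<close>] pos[OF \<open>0 \<le> x\<close>]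
        DERIV_cdivide[OF DERIV_chain2[OF has_real_derivative_pronic
          has_real_derivative_surplus[OF assms \<open>0 \<le> x\<close>]], of 2]
      by simp
  qed
qed (use assms in \<open>auto simp: cdf_averse_def surplus_zero surplus_top pronic_def\<close>)

lemma sym_equilibrium_averse:
  assumes "2 \<le> n" and M: "M = real (n - 1)"
  shows "sym_equilibrium n (\<lambda>x. x / (1 + x)) 0 (2 * M + 1) (cdf_averse M) (\<lambda>\<gamma>. \<gamma>) (bid_averse M)"
  unfolding sym_equilibrium_def
proof (intro conjI ballI impI)
  have "0 < M" using assms by simp
  show "strict_mono_on {0..2 * M + 1} (bid_averse M)"
    using \<open>0 < M\<close> by (intro bid_averse_strict_mono_on) auto
  fix v assume v: "v \<in> {0..2 * M + 1}"
  then show "bid_averse M v \<le> v"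
    using surplus_nonneg[OF \<open>0 < M\<close>] by (simp add: bid_averse_def)
  fix x assume x: "x \<in> {0..2 * M + 1}" and "bid_averse M x \<le> v"
  define y s where "y = surplus M v" and "s = surplus M x"
  have "0 \<le> y" "0 \<le> s"
    using surplus_nonneg[OF \<open>0 < M\<close>] x v unfolding y_def s_def by auto
  have surplus_v: "v - bid_averse M v = y"
    unfolding y_def bid_averse_def by simp
  have surplus_x: "v - bid_averse M x = y + M * pronic y - M * pronic s"
    using surplus_add_pronic[OF \<open>0 < M\<close>, of v] bid_averse_eq[OF \<open>0 < M\<close>, of x] x v
    unfolding y_def s_def by simp
  have "(y + M * pronic y - M * pronic s) / (1 + (y + M * pronic y - M * pronic s)) * pronic s ^ (n - 1)
      \<le> y / (1 + y) * pronic y ^ (n - 1)"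
    using ratio_payoff_max[of "n - 1" y s] assms \<open>0 \<le> y\<close> \<open>0 \<le> s\<close> \<open>bid_averse M x \<le> v\<close> surplus_x
    by simp
  then have "(y + M * pronic y - M * pronic s) / (1 + (y + M * pronic y - M * pronic s))
      * pronic s ^ (n - 1) / 2 ^ (n - 1) \<le> y / (1 + y) * pronic y ^ (n - 1) / 2 ^ (n - 1)"
    by (intro divide_right_mono) auto
  then show "(v - bid_averse M x) / (1 + (v - bid_averse M x)) * cdf_averse M x ^ (n - 1)
      \<le> (v - bid_averse M v) / (1 + (v - bid_averse M v)) * cdf_averse M v ^ (n - 1)"
    using x v \<open>0 < M\<close> unfolding surplus_v surplus_x
    by (simp add: cdf_averse_eq power_divide y_def s_def)
qed

lemma bid_cdf_averse:
  assumes "0 < M"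
  shows "bid_cdf 0 (2 * M + 1) (cdf_averse M) (bid_averse M) b = uniform_cdf 0 (2 * M) b"
proof -
  have bottom: "bid_averse M 0 = 0" and top: "bid_averse M (2 * M + 1) = 2 * M"
    using assms by (simp_all add: bid_averse_def surplus_zero surplus_top)
  have "bid_cdf 0 (2 * M + 1) (cdf_averse M) (bid_averse M) b
      = uniform_cdf (bid_averse M 0) (bid_averse M (2 * M + 1)) b"
  proof (rule bid_cdf_eq_uniform_cdf)
    show "strict_mono_on {0..2 * M + 1} (bid_averse M)"
      using assms by (intro bid_averse_strict_mono_on) auto
    show "continuous_on {0..2 * M + 1} (bid_averse M)"
      unfolding bid_averse_def[abs_def]
      using continuous_on_subset[OF continuous_on_surplus[OF assms], of "{0..2 * M + 1}"]
      by (intro continuous_intros) auto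
    show "\<forall>v\<in>{0..2 * M + 1}. cdf_averse M v
        = (bid_averse M v - bid_averse M 0) / (bid_averse M (2 * M + 1) - bid_averse M 0)"
      using assms unfolding bottom top by (simp add: cdf_averse_eq bid_averse_eq)
  qed (use assms in simp)
  then show ?thesis unfolding bottom top .
qed

theorem proposition1:
  fixes n :: nat
  assumes "n \<ge> 2"
  shows "\<exists>u lo hi F0 D u' lo' hi' F0' D' \<beta> \<beta>'.
           model_structure u lo hi F0 D \<and> model_structure u' lo' hi' F0' D' \<and>
           F0 \<noteq> F0' \<and>
           sym_equilibrium n u lo hi F0 D \<beta> \<and> sym_equilibrium n u' lo' hi' F0' D' \<beta>' \<and>
           (\<forall>b. bid_cdf lo hi F0 \<beta> b = bid_cdf lo' hi' F0' \<beta>' b)"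
proof -
  define M where "M = real (n - 1)"
  have "0 < M" using assms by (simp add: M_def)
  have "cdf_neutral M (2 * M + 1) \<noteq> cdf_averse M (2 * M + 1)"
    using \<open>0 < M\<close> by (simp add: cdf_neutral_def cdf_averse_def)
  then have "cdf_neutral M \<noteq> cdf_averse M" by metis
  moreover have "\<forall>b. bid_cdf 0 (2 * M + 2) (cdf_neutral M) (bid_neutral M) b
      = bid_cdf 0 (2 * M + 1) (cdf_averse M) (bid_averse M) b"
    using bid_cdf_neutral[OF \<open>0 < M\<close>] bid_cdf_averse[OF \<open>0 < M\<close>] by simp
  ultimately show ?thesis
    using model_structure_neutral[OF \<open>0 < M\<close>] model_structure_averse[OF \<open>0 < M\<close>]
      sym_equilibrium_neutral[OF assms M_def] sym_equilibrium_averse[OF assms M_def]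
    by blast
qed

end
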